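(* Let $A\in\mathbb{C}^{n\times n}$ with $k=\mathrm{Ind}(A)$, and let $m\in\mathbb{N}=\{1,2,\dots\}$. Then: (a) $A^{\#_m}=(A^{\mathrm{cEP}})^{m+1}A^mP_{A^m}$; (b) $A^{\#_m}=(A^{\mathrm{WG}})^mA^{m-1}P_{A^m}$; (c) $AA^{\#_m}=(A^{\mathrm{cEP}})^mA^mP_{A^m}=A^{\mathrm{WG}_{m-1}}AP_{A^m}$; (d) $A^{\#_m}A=(A^{\mathrm{cEP}})^{m+1}A^mP_{A^m}A$; (e) $A^{\#_m}A^m=A^{\mathrm{WG}_m}A^m=(A^{\mathrm{cEP}})^{m+1}A^{2m}$; (f) for every $Y\in\mathbb{C}^{n\times n}$ with $YAY=Y$ and $\mathcal{R}(Y)=\mathcal{R}(A^k)$, one has $A^{\#_m}=YAA^{\#_m}$.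
   Context: For $A\in\mathbb{C}^{n\times n}$: $A^\dagger$ is the Moore–Penrose inverse, $\mathcal{R}(\cdot)$ and $\mathcal{N}(\cdot)$ denote column space and null space, $P_A=AA^\dagger$, and $A^0=I_n$. The index $\mathrm{Ind}(A)$ is the smallest nonnegative integer $k$ with $\mathcal{R}(A^k)=\mathcal{R}(A^{k+1})$. The core-EP inverse $A^{\mathrm{cEP}}$ is the unique $X\in\mathbb{C}^{n\times n}$ with $XAX=X$ and $\mathcal{R}(X)=\mathcal{R}(X^* )=\mathcal{R}(A^k)$, $k=\mathrm{Ind}(A)$. For an integer $j\ge 0$, the $j$-weak group inverse is $A^{\mathrm{WG}_j}:=(A^{\mathrm{cEP}})^{j+1}A^j$; the WG inverse is $A^{\mathrm{WG}}:=A^{\mathrm{WG}_1}=(A^{\mathrm{cEP}})^2A$. For $m\in\mathbb{N}$, the $m$-weak core inverse of $A$ is $A^{\#_m}:=A^{\mathrm{WG}_m}P_{A^m}$. *)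

theory Defs
  imports "HOL-Analysis.Analysis"
begin

type_synonym 'n cmat = "complex^'n^'n"

definition ctrans :: "'n::finite cmat \<Rightarrow> 'n cmat" where
  "ctrans A = (\<chi> i j. cnj (A $ j $ i))"

fun mpow :: "'n::finite cmat \<Rightarrow> nat \<Rightarrow> 'n cmat" where
  "mpow A 0 = mat 1"
| "mpow A (Suc k) = A ** mpow A k"

definition colsp :: "'n::finite cmat \<Rightarrow> (complex^'n) set" where
  "colsp A = range (\<lambda>x. A *v x)"

definition MP :: "'n::finite cmat \<Rightarrow> 'n cmat" where
  "MP A = (THE X. A ** X ** A = A \<and> X ** A ** X = X \<and>
                 ctrans (A ** X) = A ** X \<and> ctrans (X ** A) = X ** A)"

definition Pr :: "'n::finite cmat \<Rightarrow> 'n cmat" where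
  "Pr A = A ** MP A"

definition ind :: "'n::finite cmat \<Rightarrow> nat" where
  "ind A = (LEAST k. colsp (mpow A k) = colsp (mpow A (Suc k)))"

definition cEP :: "'n::finite cmat \<Rightarrow> 'n cmat" where
  "cEP A = (THE X. X ** A ** X = X \<and> colsp X = colsp (mpow A (ind A)) \<and>
                  colsp (ctrans X) = colsp (mpow A (ind A)))"

definition WGj :: "'n::finite cmat \<Rightarrow> nat \<Rightarrow> 'n cmat" where
  "WGj A j = mpow (cEP A) (j + 1) ** mpow A j"

definition WG :: "'n::finite cmat \<Rightarrow> 'n cmat" where
  "WG A = WGj A 1"

definition wcore :: "'n::finite cmat \<Rightarrow> nat \<Rightarrow> 'n cmat" where
  "wcore A m = WGj A m ** Pr (mpow A m)"

end

theory Submission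
  imports Defs
begin

(* Splitting off the lowest-order term of a linear dependence among the powers of a square
   matrix C gives C^s = C^(s+1) G with G commuting with C.  For Hermitian B this forces
   B G B = B (B^2 W = 0 implies B W = 0), which yields {1,3}- and {1,4}-inverses of every A
   and hence the Moore-Penrose inverse.  At s = Ind(A) = k it yields the Drazin inverse D, and
   X = D P_(A^k) satisfies X A X = X, R(X) = R(X^* ) = R(A^k) and A X = P_(A^k); since outer
   inverses with the same range and co-range coincide, X is the core-EP inverse.  The identities
   then follow from X A X = X, which gives (X^2 A)^m = X^(m+1) A, from A X^2 = X, from
   P_(A^m) A^m = A^m, and from Y A Z = Z for every Y with Y A Y = Y, R(Y) = R(A^k) and every Z
   with R(Z) contained in R(A^k). *)

lemma mpow_Suc_right: "mpow A (Suc k) = mpow A k ** A"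
  by (induction k) (simp_all add: matrix_mul_assoc)

lemma mpow_add: "mpow A (i + j) = mpow A i ** mpow A j"
  by (induction i) (simp_all add: matrix_mul_assoc)

lemma matrix_mul_assoc_commute:
  assumes "X ** Y = Y ** X"
  shows "Z ** X ** Y = Z ** Y ** X"
  by (simp add: assms flip: matrix_mul_assoc)

lemma commute_mpow:
  assumes "G ** A = A ** G"
  shows "G ** mpow A i = mpow A i ** G"
proof (induction i)
  case (Suc i)
  have "G ** mpow A (Suc i) = A ** (G ** mpow A i)"
    by (simp add: matrix_mul_assoc assms)
  then show ?case
    by (simp add: Suc matrix_mul_assoc)
qed simp

lemma commute_mpow_mpow:
  assumes "G ** A = A ** G"
  shows "mpow G j ** mpow A i = mpow A i ** mpow G j"
  using commute_mpow[OF commute_mpow[OF assms, symmetric]] by simp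

lemma matrix_diff_ldistrib: "(X::'n::finite cmat) ** (Y - Z) = X ** Y - X ** Z"
  by (simp add: matrix_matrix_mult_def vec_eq_iff right_diff_distrib sum_subtractf)

lemma matrix_diff_rdistrib: "((Y::'n::finite cmat) - Z) ** X = Y ** X - Z ** X"
  by (simp add: matrix_matrix_mult_def vec_eq_iff left_diff_distrib sum_subtractf)

lemma matrix_add_rdistrib: "((Y::'n::finite cmat) + Z) ** X = Y ** X + Z ** X"
  by (simp add: matrix_matrix_mult_def vec_eq_iff distrib_right sum.distrib)

lemma matrix_sum_ldistrib:
  fixes f :: "'a \<Rightarrow> 'n::finite cmat"
  shows "X ** (\<Sum>i\<in>S. f i) = (\<Sum>i\<in>S. X ** f i)"
  by (induction S rule: infinite_finite_induct) (simp_all add: matrix_add_ldistrib)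

lemma matrix_sum_rdistrib:
  fixes f :: "'a \<Rightarrow> 'n::finite cmat"
  shows "(\<Sum>i\<in>S. f i) ** X = (\<Sum>i\<in>S. f i ** X)"
  by (induction S rule: infinite_finite_induct) (simp_all add: matrix_add_rdistrib)

lemma ctrans_ctrans [simp]: "ctrans (ctrans X) = X"
  by (simp add: ctrans_def vec_eq_iff)

lemma ctrans_mult: "ctrans (X ** Y) = ctrans Y ** ctrans (X::'n::finite cmat)"
  by (simp add: ctrans_def matrix_matrix_mult_def vec_eq_iff mult.commute)

lemma ctrans_diff: "ctrans (X - Y) = ctrans X - ctrans (Y::'n::finite cmat)"
  by (simp add: ctrans_def vec_eq_iff)

lemma ctrans_mult_self_eq_0:
  assumes "ctrans D ** D = (0::'n::finite cmat)"
  shows "D = 0"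
proof -
  have "D $ i $ j = 0" for i j
  proof -
    have "complex_of_real (\<Sum>l\<in>UNIV. (cmod (D $ l $ j))\<^sup>2) = (ctrans D ** D) $ j $ j"
      by (simp only: of_real_sum complex_norm_square)
        (simp add: ctrans_def matrix_matrix_mult_def mult.commute)
    also have "\<dots> = 0"
      using assms by simp
    finally have "(\<Sum>l\<in>UNIV. (cmod (D $ l $ j))\<^sup>2) = 0"
      by (simp only: of_real_eq_0_iff)
    then show ?thesis
      by (simp add: sum_nonneg_eq_0_iff)
  qed
  then show ?thesis
    by (simp add: vec_eq_iff)
qed

lemma colsp_mult_subset: "colsp (Y ** U) \<subseteq> colsp Y"
  by (auto simp: colsp_def matrix_vector_mul_assoc[symmetric])

lemma colsp_subset_iff: "colsp X \<subseteq> colsp Y \<longleftrightarrow> (\<exists>U. X = Y ** U)"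
proof
  assume "colsp X \<subseteq> colsp Y"
  then have "\<forall>j. \<exists>v. Y *v v = X *v axis j 1"
    unfolding colsp_def by (metis (mono_tags) image_iff rangeI subsetD)
  then obtain f where f: "\<And>j. Y *v f j = X *v axis j 1"
    by metis
  have "(Y ** (\<chi> i j. f j $ i)) $ i $ j = X $ i $ j" for i j
  proof -
    have "(Y ** (\<chi> i j. f j $ i)) $ i $ j = (Y *v f j) $ i"
      by (simp add: matrix_matrix_mult_def matrix_vector_mult_def)
    also have "\<dots> = (X *v axis j 1) $ i"
      by (simp only: f)
    also have "\<dots> = X $ i $ j"
      by (simp add: matrix_vector_mult_def axis_def if_distrib if_distribR cong: if_cong)
    finally show ?thesis .
  qed
  then show "\<exists>U. X = Y ** U"
    by (metis vec_eq_iff)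
next
  assume "\<exists>U. X = Y ** U"
  then show "colsp X \<subseteq> colsp Y"
    using colsp_mult_subset by blast
qed

lemma outer_inverse_absorb_left:
  assumes "Y ** A ** Y = Y" and "colsp Z \<subseteq> colsp Y"
  shows "Y ** A ** Z = Z"
proof -
  obtain U where "Z = Y ** U"
    using assms(2) unfolding colsp_subset_iff by blast
  then show ?thesis
    using assms(1) by (simp add: matrix_mul_assoc)
qed

lemma outer_inverse_absorb_right:
  fixes Y :: "'n::finite cmat"
  assumes "Y ** A ** Y = Y" and "colsp (ctrans Z) \<subseteq> colsp (ctrans Y)"
  shows "Z ** A ** Y = Z"
proof -
  obtain U where "ctrans Z = ctrans Y ** U"
    using assms(2) unfolding colsp_subset_iff by blast
  then have "ctrans (ctrans Z) = ctrans (ctrans Y ** U)"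
    by (rule arg_cong)
  then have "Z = ctrans U ** Y"
    by (simp add: ctrans_mult)
  then show ?thesis
    using assms(1) by (simp flip: matrix_mul_assoc)
qed

lemma outer_inverse_unique:
  fixes X Y :: "'n::finite cmat"
  assumes "X ** A ** X = X" "Y ** A ** Y = Y"
    and "colsp X = colsp Y" "colsp (ctrans X) = colsp (ctrans Y)"
  shows "X = Y"
proof -
  have "X ** A ** Y = X"
    by (rule outer_inverse_absorb_right[OF assms(2)]) (simp only: assms(4) order_refl)
  moreover have "X ** A ** Y = Y"
    by (rule outer_inverse_absorb_left[OF assms(1)]) (simp only: assms(3) order_refl)
  ultimately show ?thesis
    by (rule trans[OF sym])
qed

section \<open>Factoring powers of a matrix\<close>

lemma commute_mpow_combination:
  fixes C :: "'n::finite cmat" and c :: "nat \<Rightarrow> real"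
  shows "(\<Sum>i\<in>S. c i *\<^sub>R mpow C i) ** C = C ** (\<Sum>i\<in>S. c i *\<^sub>R mpow C i)"
  using commute_mpow[of C C]
  by (simp add: matrix_sum_ldistrib matrix_sum_rdistrib matrix_scalar_ac
      scalar_matrix_assoc[symmetric])

lemma mpow_factor_of_relation:
  fixes C :: "'n::finite cmat" and c :: "nat \<Rightarrow> real"
  assumes "i < N" "c i \<noteq> 0" and "mpow C t ** (\<Sum>i<N. c i *\<^sub>R mpow C i) = 0"
  shows "\<exists>s G. mpow C s = mpow C (Suc s) ** G \<and> G ** C = C ** G"
  using assms
proof (induction N arbitrary: i c t)
  case 0
  then show ?case by simp
next
  case (Suc N)
  define R where "R = (\<Sum>i<N. c (Suc i) *\<^sub>R mpow C i)"
  have "(\<Sum>i<Suc N. c i *\<^sub>R mpow C i) = c 0 *\<^sub>R mat 1 + C ** R"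
    unfolding R_def sum.lessThan_Suc_shift
    by (simp add: matrix_sum_ldistrib matrix_scalar_ac scalar_matrix_assoc)
  then have relation: "c 0 *\<^sub>R mpow C t + mpow C (Suc t) ** R = 0"
    using Suc.prems(3)
    by (simp add: matrix_add_ldistrib matrix_scalar_ac matrix_mul_assoc commute_mpow[of C C])
  show ?case
  proof (cases "c 0 = 0")
    case True
    then obtain i' where "i' < N" "(c \<circ> Suc) i' \<noteq> 0"
      using Suc.prems(1,2) by (cases i) auto
    moreover have "mpow C (Suc t) ** (\<Sum>i<N. (c \<circ> Suc) i *\<^sub>R mpow C i) = 0"
      using relation True by (simp add: R_def)
    ultimately show ?thesis
      using Suc.IH by blast
  next
    case False
    \<comment> \<open>the lowest-order term of the relation expresses C^t through C^(t+1)\<close>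
    have "mpow C (Suc t) ** R = - (c 0 *\<^sub>R mpow C t)"
      using relation by (simp add: eq_neg_iff_add_eq_0 add.commute)
    then have "mpow C (Suc t) ** ((- 1 / c 0) *\<^sub>R R) = mpow C t"
      using False by (simp only: matrix_scalar_ac scalar_matrix_assoc[symmetric]) simp
    then have "mpow C t = mpow C (Suc t) ** ((- 1 / c 0) *\<^sub>R R)"
      by simp
    moreover have "((- 1 / c 0) *\<^sub>R R) ** C = C ** ((- 1 / c 0) *\<^sub>R R)"
      using commute_mpow_combination[where c="c \<circ> Suc" and S="{..<N}" and C=C]
      by (simp only: R_def comp_def matrix_scalar_ac scalar_matrix_assoc[symmetric])
    ultimately show ?thesis
      by blast
  qed
qed

lemma exists_mpow_factor:
  fixes C :: "'n::finite cmat"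
  shows "\<exists>s G. mpow C s = mpow C (Suc s) ** G \<and> G ** C = C ** G"
proof (cases "inj_on (mpow C) {..DIM('n cmat)}")
  case True
  \<comment> \<open>complex matrices form a real vector space of dimension DIM, so its DIM + 1 distinct
    powers C^0, ..., C^DIM are linearly dependent over the reals\<close>
  let ?S = "mpow C ` {..DIM('n cmat)}"
  have "card ?S = Suc DIM('n cmat)"
    using True card_image by fastforce
  then have "dependent ?S"
    using independent_bound[of ?S] by auto
  then obtain u where u: "\<exists>v\<in>?S. u v \<noteq> 0" "(\<Sum>v\<in>?S. u v *\<^sub>R v) = 0"
    using real_vector.dependent_finite[of ?S] by blast
  have "(\<Sum>i<Suc DIM('n cmat). u (mpow C i) *\<^sub>R mpow C i) = 0"
    using u(2) sum.reindex[OF True, of "\<lambda>v. u v *\<^sub>R v"]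
    by (simp add: lessThan_Suc_atMost comp_def)
  moreover obtain i where "i < Suc DIM('n cmat)" "u (mpow C i) \<noteq> 0"
    using u(1) by (auto simp: less_Suc_eq_le)
  ultimately show ?thesis
    using mpow_factor_of_relation[where c="\<lambda>i. u (mpow C i)" and N="Suc DIM('n cmat)" and t=0]
    by simp
next
  case False
  then obtain i j where "i < j" and eq: "mpow C i = mpow C j"
    unfolding inj_on_def by (metis linorder_neqE_nat)
  then have "mpow C i = mpow C (Suc i) ** mpow C (j - Suc i)"
    using mpow_add[of C "Suc i" "j - Suc i"] by simp
  then show ?thesis
    using commute_mpow[of C C] by metis
qed

section \<open>The Moore--Penrose inverse\<close>

lemma hermitian_mpow_mult_eq_0:
  fixes B W :: "'n::finite cmat"
  assumes "ctrans B = B" and "mpow B j ** W = 0"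
  shows "B ** W = 0"
  using assms(2)
proof (induction j arbitrary: W)
  case (Suc j)
  have "mpow B j ** (B ** W) = 0"
    using Suc.prems by (simp add: commute_mpow[of B B] matrix_mul_assoc)
  then have "B ** (B ** W) = 0"
    by (rule Suc.IH)
  then have "ctrans (B ** W) ** (B ** W) = 0"
    by (simp add: ctrans_mult assms(1) flip: matrix_mul_assoc)
  then show ?case
    by (rule ctrans_mult_self_eq_0)
qed simp

lemma hermitian_inner_inverse:
  fixes B :: "'n::finite cmat"
  assumes herm: "ctrans B = B"
  shows "\<exists>G. B ** G ** B = B \<and> ctrans G = G"
proof -
  obtain s G where G: "mpow B s = mpow B (Suc s) ** G" "G ** B = B ** G"
    using exists_mpow_factor by blast
  have "mpow B s ** (mat 1 - B ** G) = 0"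
    using G(1) by (simp add: matrix_diff_ldistrib commute_mpow[of B B] matrix_mul_assoc)
  then have "B ** (mat 1 - B ** G) = 0"
    using herm hermitian_mpow_mult_eq_0 by blast
  then have BGB: "B ** G ** B = B"
    using G(2) by (simp add: matrix_diff_ldistrib matrix_mul_assoc[symmetric])
  have "B ** ctrans G ** B = B"
    using arg_cong[OF BGB, of ctrans] by (simp add: ctrans_mult herm matrix_mul_assoc)
  then have "B ** (G ** B ** ctrans G) ** B = B"
    using BGB by (simp add: matrix_mul_assoc)
  moreover have "ctrans (G ** B ** ctrans G) = G ** B ** ctrans G"
    by (simp add: ctrans_mult herm matrix_mul_assoc)
  ultimately show ?thesis
    using BGB herm by metis
qed

lemma exists_least_squares_inverse:
  fixes A :: "'n::finite cmat"
  shows "\<exists>Y. A ** Y ** A = A \<and> ctrans (A ** Y) = A ** Y"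
proof -
  obtain G where G: "ctrans A ** A ** G ** (ctrans A ** A) = ctrans A ** A" "ctrans G = G"
    using hermitian_inner_inverse[of "ctrans A ** A"] by (auto simp: ctrans_mult)
  have "ctrans (A ** G ** ctrans A ** A - A) ** (A ** G ** ctrans A ** A - A) = 0"
    using G by (simp add: ctrans_diff ctrans_mult matrix_diff_ldistrib matrix_diff_rdistrib
        matrix_mul_assoc)
  then have "A ** (G ** ctrans A) ** A = A"
    using ctrans_mult_self_eq_0 by (fastforce simp: matrix_mul_assoc)
  moreover have "ctrans (A ** (G ** ctrans A)) = A ** (G ** ctrans A)"
    by (simp add: ctrans_mult G(2) matrix_mul_assoc)
  ultimately show ?thesis
    by blast
qed

definition penrose :: "'n::finite cmat \<Rightarrow> 'n cmat \<Rightarrow> bool" where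
  "penrose A X \<longleftrightarrow> A ** X ** A = A \<and> X ** A ** X = X \<and>
     ctrans (A ** X) = A ** X \<and> ctrans (X ** A) = X ** A"

lemma exists_penrose: "\<exists>X. penrose (A::'n::finite cmat) X"
proof -
  \<comment> \<open>Urquhart: Z A Y is the Moore--Penrose inverse when Y is a {1,3}-inverse
    and Z a {1,4}-inverse\<close>
  obtain Y where Y: "A ** Y ** A = A" "ctrans (A ** Y) = A ** Y"
    using exists_least_squares_inverse by blast
  obtain Z' where Z': "ctrans A ** Z' ** ctrans A = ctrans A"
    "ctrans (ctrans A ** Z') = ctrans A ** Z'"
    using exists_least_squares_inverse by blast
  define Z where "Z = ctrans Z'"
  have Z: "A ** Z ** A = A" "ctrans (Z ** A) = Z ** A"
    using arg_cong[OF Z'(1), of ctrans] Z'(2) by (simp_all add: Z_def ctrans_mult matrix_mul_assoc)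
  have "Z ** A ** Y ** A = Z ** A" "A ** Z ** A ** Y = A ** Y" "Z ** A ** Z ** A = Z ** A"
    using Y(1) Z(1) by (simp_all flip: matrix_mul_assoc)
  then have "penrose A (Z ** A ** Y)"
    unfolding penrose_def using Y Z by (simp add: matrix_mul_assoc)
  then show ?thesis ..
qed

lemma penrose_unique:
  fixes A X Y :: "'n::finite cmat"
  assumes "penrose A X" and "penrose A Y"
  shows "X = Y"
proof -
  have X: "A ** X ** A = A" "X ** A ** X = X" "ctrans (A ** X) = A ** X" "ctrans (X ** A) = X ** A"
    and Y: "A ** Y ** A = A" "Y ** A ** Y = Y" "ctrans (A ** Y) = A ** Y" "ctrans (Y ** A) = Y ** A"
    using assms by (auto simp: penrose_def)
  have "X = X ** ctrans (A ** X)"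
    using X(2,3) by (simp add: matrix_mul_assoc)
  also have "\<dots> = X ** ctrans X ** ctrans (A ** Y ** A)"
    using Y(1) by (simp add: ctrans_mult matrix_mul_assoc)
  also have "\<dots> = X ** ctrans (A ** X) ** ctrans (A ** Y)"
    by (simp add: ctrans_mult matrix_mul_assoc)
  also have "\<dots> = X ** A ** Y"
    using X(2,3) Y(3) by (simp add: matrix_mul_assoc)
  finally have XAY: "X = X ** A ** Y" .
  have "Y = ctrans (Y ** A) ** Y"
    using Y(2,4) by simp
  also have "\<dots> = ctrans (A ** X ** A) ** ctrans Y ** Y"
    using X(1) by (simp add: ctrans_mult)
  also have "\<dots> = ctrans (X ** A) ** ctrans (Y ** A) ** Y"
    by (simp add: ctrans_mult matrix_mul_assoc)
  also have "\<dots> = X ** A ** Y"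
    using Y(2,4) X(4) by (simp add: matrix_mul_assoc[symmetric])
  finally show ?thesis
    using XAY by metis
qed

lemma penrose_MP: "penrose A (MP A)"
proof -
  have "\<exists>!X. penrose A X"
    using exists_penrose penrose_unique by blast
  then have "penrose A (THE X. penrose A X)"
    by (rule theI')
  then show ?thesis
    unfolding MP_def penrose_def by simp
qed

lemma Pr_mult_self: "Pr A ** A = A"
  using penrose_MP[of A] by (simp only: Pr_def penrose_def)

lemma ctrans_Pr: "ctrans (Pr A) = Pr A"
  using penrose_MP[of A] by (simp only: Pr_def penrose_def)

lemma Pr_mult_colsp:
  assumes "colsp Z \<subseteq> colsp A"
  shows "Pr A ** Z = Z"
  unfolding Pr_def
proof (rule outer_inverse_absorb_left[OF _ assms])
  show "A ** MP A ** A = A"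
    using penrose_MP[of A] by (simp only: penrose_def)
qed

section \<open>The Drazin and core-EP inverses\<close>

lemma mpow_factor_iterate:
  assumes "mpow A k = mpow A (Suc k) ** H"
  shows "mpow A (k + j) ** mpow H j = mpow A k"
proof (induction j)
  case (Suc j)
  have "mpow A (k + Suc j) = mpow A (j + Suc k)"
    by (simp add: add.commute)
  also have "\<dots> = mpow A j ** mpow A (Suc k)"
    by (rule mpow_add)
  finally have "mpow A (k + Suc j) ** mpow H (Suc j) =
      mpow A j ** (mpow A (Suc k) ** H) ** mpow H j"
    unfolding mpow.simps(2)[of H] by (simp only: matrix_mul_assoc)
  also have "\<dots> = mpow A j ** mpow A k ** mpow H j"
    by (simp only: assms[symmetric])
  also have "\<dots> = mpow A (k + j) ** mpow H j"
    by (simp only: mpow_add[symmetric] add.commute)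
  also have "\<dots> = mpow A k"
    by (rule Suc.IH)
  finally show ?case .
qed simp

lemma ind_mpow_factor:
  "\<exists>G. mpow A (ind A) = mpow A (Suc (ind A)) ** G \<and> G ** A = A ** G"
proof -
  obtain s G where G: "mpow A s = mpow A (Suc s) ** G" "G ** A = A ** G"
    using exists_mpow_factor by blast
  have "colsp (mpow A s) = colsp (mpow A (Suc s))"
  proof
    show "colsp (mpow A s) \<subseteq> colsp (mpow A (Suc s))"
      using colsp_mult_subset[of "mpow A (Suc s)" G] unfolding G(1)[symmetric] .
    show "colsp (mpow A (Suc s)) \<subseteq> colsp (mpow A s)"
      using colsp_mult_subset[of "mpow A s" A] unfolding mpow_Suc_right[symmetric] .
  qed
  then have "ind A \<le> s" and stable: "colsp (mpow A (ind A)) = colsp (mpow A (Suc (ind A)))"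
    unfolding ind_def by (rule Least_le, rule LeastI)
  obtain H where H: "mpow A (ind A) = mpow A (Suc (ind A)) ** H"
    using equalityD1[OF stable] unfolding colsp_subset_iff by blast
  define W where "W = mpow H (s - ind A)"
  have "mpow A (ind A) = mpow A s ** W"
    using mpow_factor_iterate[OF H, of "s - ind A"] \<open>ind A \<le> s\<close> by (simp add: W_def)
  also have "\<dots> = A ** (mpow A s ** G) ** W"
    using arg_cong[OF G(1), of "\<lambda>Z. Z ** W"] by (simp add: matrix_mul_assoc)
  also have "\<dots> = A ** G ** (mpow A s ** W)"
    using matrix_mul_assoc_commute[OF commute_mpow[OF G(2), of s], of A]
    by (simp add: matrix_mul_assoc)
  also have "\<dots> = A ** G ** mpow A (ind A)"
    using \<open>mpow A (ind A) = mpow A s ** W\<close> by simp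
  also have "\<dots> = mpow A (Suc (ind A)) ** G"
    using matrix_mul_assoc_commute[OF commute_mpow[OF G(2), of "ind A"], of A] by simp
  finally show ?thesis
    using G(2) by blast
qed

lemma exists_drazin_inverse:
  "\<exists>D. D ** A ** D = D \<and> A ** D = D ** A \<and> mpow A (Suc (ind A)) ** D = mpow A (ind A)"
proof -
  define k where "k = ind A"
  obtain G where G: "mpow A k = mpow A (Suc k) ** G" "G ** A = A ** G"
    using ind_mpow_factor unfolding k_def by blast
  define M Q where "M = mpow A k" and "Q = mpow G (Suc k)"
  have AM: "A ** M = M ** A" and MA: "mpow A (Suc k) = M ** A"
    unfolding M_def by (rule commute_mpow[of A A, OF refl], rule mpow_Suc_right)
  have QM: "Q ** M = M ** Q"
    unfolding M_def Q_def by (rule commute_mpow_mpow[OF G(2)])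
  have QA: "Q ** A = A ** Q"
    unfolding Q_def by (rule commute_mpow[symmetric]) (rule G(2)[symmetric])
  have "mpow A (Suc k) ** M = mpow A (k + Suc k)"
    unfolding M_def by (simp only: mpow_add[symmetric] add.commute)
  then have "mpow A (Suc k) ** (M ** Q) = mpow A (k + Suc k) ** mpow G (Suc k)"
    by (simp only: matrix_mul_assoc Q_def)
  also have "\<dots> = M"
    unfolding M_def by (rule mpow_factor_iterate[OF G(1)])
  finally have power: "mpow A (Suc k) ** (M ** Q) = M" .
  have "M ** Q ** A ** (M ** Q) = Q ** (mpow A (Suc k) ** (M ** Q))"
    by (simp only: MA QM matrix_mul_assoc)
  then have "M ** Q ** A ** (M ** Q) = M ** Q"
    by (simp only: power QM)
  moreover have "A ** (M ** Q) = M ** Q ** A"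
    by (simp only: matrix_mul_assoc AM matrix_mul_assoc_commute[OF QA])
  ultimately show ?thesis
    using power unfolding M_def k_def by blast
qed

lemma exists_cEP:
  fixes A :: "'n::finite cmat"
  defines "M \<equiv> mpow A (ind A)"
  shows "\<exists>X. X ** A ** X = X \<and> colsp X = colsp M \<and> colsp (ctrans X) = colsp M \<and> A ** X = Pr M"
proof -
  obtain D where D: "D ** A ** D = D" "A ** D = D ** A" "mpow A (Suc (ind A)) ** D = M"
    using exists_drazin_inverse unfolding M_def by blast
  have DM: "D ** M = M ** D"
    unfolding M_def by (rule commute_mpow) (rule D(2)[symmetric])
  have AM: "A ** M = M ** A"
    unfolding M_def by (rule commute_mpow[of A A, OF refl])
  have AMD: "A ** M ** D = M"
    using D(3) by (simp add: M_def)
  have ADM: "A ** D ** M = M"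
    by (simp only: matrix_mul_assoc_commute[OF DM] AMD)
  define X where "X = D ** Pr M"
  have AX: "A ** X = Pr M"
    by (simp add: X_def Pr_def matrix_mul_assoc ADM)
  have "Pr M ** Pr M = Pr M"
    by (rule Pr_mult_colsp) (simp only: Pr_def colsp_mult_subset)
  then have "X ** Pr M = X"
    by (simp add: X_def flip: matrix_mul_assoc)
  then have "X ** A ** X = X"
    by (simp add: AX flip: matrix_mul_assoc)
  moreover have "colsp X = colsp M"
  proof
    have "X = M ** (D ** MP M)"
      by (simp add: X_def Pr_def matrix_mul_assoc DM)
    then show "colsp X \<subseteq> colsp M"
      by (simp add: colsp_mult_subset)
    have "X ** (M ** A) = D ** (Pr M ** M) ** A"
      by (simp add: X_def matrix_mul_assoc)
    also have "\<dots> = M"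
      by (simp only: Pr_mult_self matrix_mul_assoc_commute[OF AM[symmetric]] D(2)[symmetric] ADM)
    finally show "colsp M \<subseteq> colsp X"
      by (metis colsp_mult_subset)
  qed
  moreover have "colsp (ctrans X) = colsp M"
  proof
    have "ctrans X = M ** (MP M ** ctrans D)"
      unfolding X_def ctrans_mult ctrans_Pr unfolding Pr_def by (simp add: matrix_mul_assoc)
    then show "colsp (ctrans X) \<subseteq> colsp M"
      by (simp add: colsp_mult_subset)
    have "ctrans X ** (ctrans A ** M) = ctrans (A ** X) ** M"
      by (simp add: ctrans_mult matrix_mul_assoc)
    also have "\<dots> = M"
      by (simp add: AX ctrans_Pr Pr_mult_self)
    finally show "colsp M \<subseteq> colsp (ctrans X)"
      by (metis colsp_mult_subset)
  qed
  ultimately show ?thesis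
    using AX by blast
qed

lemma
  fixes A :: "'n::finite cmat"
  shows cEP_outer_inverse: "cEP A ** A ** cEP A = cEP A"
    and colsp_cEP: "colsp (cEP A) = colsp (mpow A (ind A))"
    and mult_cEP: "A ** cEP A = Pr (mpow A (ind A))"
proof -
  obtain X where X: "X ** A ** X = X" "colsp X = colsp (mpow A (ind A))"
    "colsp (ctrans X) = colsp (mpow A (ind A))" "A ** X = Pr (mpow A (ind A))"
    using exists_cEP by blast
  have "cEP A = X"
    unfolding cEP_def
  proof (rule the_equality)
    fix Y
    assume "Y ** A ** Y = Y \<and> colsp Y = colsp (mpow A (ind A)) \<and>
      colsp (ctrans Y) = colsp (mpow A (ind A))"
    then show "Y = X"
      using outer_inverse_unique[of Y A X] X by simp
  qed (use X in blast)
  then show "cEP A ** A ** cEP A = cEP A" "colsp (cEP A) = colsp (mpow A (ind A))"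
    "A ** cEP A = Pr (mpow A (ind A))"
    using X by simp_all
qed

section \<open>The m-weak core inverse\<close>

lemma mpow_square_mult_of_outer_inverse:
  fixes X A :: "'n::finite cmat"
  assumes "X ** A ** X = X"
  shows "mpow (X ** X ** A) (Suc j) = mpow X (Suc (Suc j)) ** A"
proof (induction j)
  case (Suc j)
  have "Z ** X ** A ** X = Z ** X" for Z :: "'n cmat"
    using assms by (simp flip: matrix_mul_assoc)
  then show ?case
    using Suc by (simp add: matrix_mul_assoc)
qed simp

lemma mult_cEP_mult_cEP: "A ** cEP A ** cEP A = cEP A"
  using mult_cEP[of A] Pr_mult_colsp[of "cEP A"] colsp_cEP[of A] by simp

lemma wcore_eq_mpow_WG:
  assumes "m \<ge> 1"
  shows "wcore A m = mpow (WG A) m ** mpow A (m - 1) ** Pr (mpow A m)"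
proof -
  obtain j where m: "m = Suc j"
    using assms by (cases m) auto
  have "mpow (WG A) m = mpow (cEP A) (Suc m) ** A"
    using mpow_square_mult_of_outer_inverse[OF cEP_outer_inverse, of A j]
    by (simp add: m WG_def WGj_def)
  then show ?thesis
    by (simp add: m wcore_def WGj_def matrix_mul_assoc)
qed

lemma mult_wcore:
  assumes "m \<ge> 1"
  shows "A ** wcore A m = mpow (cEP A) m ** mpow A m ** Pr (mpow A m)"
proof -
  obtain j where m: "m = Suc j"
    using assms by (cases m) auto
  show ?thesis
    using mult_cEP_mult_cEP[of A] by (simp add: m wcore_def WGj_def matrix_mul_assoc)
qed

lemma WGj_mult: "WGj A j ** A = mpow (cEP A) (Suc j) ** mpow A (Suc j)"
  unfolding WGj_def
  by (simp only: Suc_eq_plus1[symmetric] mpow_Suc_right[symmetric] matrix_mul_assoc[symmetric])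

lemma wcore_mult_mpow: "wcore A m ** mpow A m = WGj A m ** mpow A m"
  by (simp add: wcore_def Pr_mult_self flip: matrix_mul_assoc)

lemma outer_inverse_mult_wcore:
  assumes "Y ** A ** Y = Y" and "colsp Y = colsp (mpow A (ind A))"
  shows "Y ** A ** wcore A m = wcore A m"
proof (rule outer_inverse_absorb_left[OF assms(1)])
  have "wcore A m = cEP A ** (mpow (cEP A) m ** mpow A m ** Pr (mpow A m))"
    by (simp add: wcore_def WGj_def matrix_mul_assoc)
  then show "colsp (wcore A m) \<subseteq> colsp Y"
    using colsp_mult_subset[of "cEP A"] colsp_cEP[of A] assms(2) by simp
qed

theorem theorem4p5:
  fixes A :: "complex^'n^'n" and m :: nat
  assumes "m \<ge> 1"
  shows "wcore A m = mpow (cEP A) (m + 1) ** mpow A m ** Pr (mpow A m)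
    \<and> wcore A m = mpow (WG A) m ** mpow A (m - 1) ** Pr (mpow A m)
    \<and> A ** wcore A m = mpow (cEP A) m ** mpow A m ** Pr (mpow A m)
    \<and> mpow (cEP A) m ** mpow A m ** Pr (mpow A m) = WGj A (m - 1) ** A ** Pr (mpow A m)
    \<and> wcore A m ** A = mpow (cEP A) (m + 1) ** mpow A m ** Pr (mpow A m) ** A
    \<and> wcore A m ** mpow A m = WGj A m ** mpow A m
    \<and> WGj A m ** mpow A m = mpow (cEP A) (m + 1) ** mpow A (2 * m)
    \<and> (\<forall>Y :: complex^'n^'n. Y ** A ** Y = Y \<and> colsp Y = colsp (mpow A (ind A))
          \<longrightarrow> wcore A m = Y ** A ** wcore A m)"
proof -
  obtain j where m: "m = Suc j"
    using assms by (cases m) auto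
  have a: "wcore A m = mpow (cEP A) (m + 1) ** mpow A m ** Pr (mpow A m)"
    by (simp add: wcore_def WGj_def)
  then have d: "wcore A m ** A = mpow (cEP A) (m + 1) ** mpow A m ** Pr (mpow A m) ** A"
    by (rule arg_cong)
  have c2: "mpow (cEP A) m ** mpow A m ** Pr (mpow A m) = WGj A (m - 1) ** A ** Pr (mpow A m)"
    using WGj_mult[of A j] by (simp add: m)
  have e2: "WGj A m ** mpow A m = mpow (cEP A) (m + 1) ** mpow A (2 * m)"
    by (simp add: WGj_def mult_2 mpow_add matrix_mul_assoc)
  show ?thesis
    using a c2 d e2 wcore_eq_mpow_WG[OF assms, of A] mult_wcore[OF assms, of A]
      wcore_mult_mpow[of A m] outer_inverse_mult_wcore[of _ A m, symmetric]
    by blast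
qed

end
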